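(* Let $\mathcal I$ and $\mathcal J$ be ideals on $\omega$ and let $X$ be a nonempty normal space. The following are equivalent: (1) $|X|<\omega$ and $\mathcal I\subseteq\mathcal J$; (2) for every sequence $(f_n)$ in $\mathcal C(X)$: $\mathcal I$-pointwise convergence to $0$ implies $\mathcal J$-uniform convergence to $0$; (3) for every $(f_n)$ in $\mathcal C(X)$: $\mathcal I$-quasi-normal convergence to $0$ implies $\mathcal J$-uniform convergence to $0$; (4) for every $(f_n)$ in $\mathcal C(X)$: $\mathcal I$-$\sigma$-uniform convergence to $0$ implies $\mathcal J$-uniform convergence to $0$.
   Context: An ideal on $\omega$ is a family $\mathcal I\subseteq\mathcal P(\omega)$ closed under finite unions and subsets, containing all finite sets, with $\omega\notin\mathcal I$. A real sequence $(a_n)$ is $\mathcal I$-convergent to $0$ if $\{n:|a_n|\ge\varepsilon\}\in\mathcal I$ for all $\varepsilon>0$. For a sequence $(f_n)$ of real functions on a set $X$: $\mathcal I$-pointwise convergence to $0$ means $(f_n(x))$ is $\mathcal I$-convergent to $0$ for each $x$; $\mathcal I$-uniform means $\{n:\exists x\in X\,(|f_n(x)|\ge\varepsilon)\}\in\mathcal I$ for each $\varepsilon>0$; $\mathcal I$-$\sigma$-uniform means $X=\bigcup_{k\in\omega}X_k$ with $(f_n\restriction X_k)$ $\mathcal I$-uniformly convergent to $0$ for each $k$; $\mathcal I$-quasi-normal means there is a sequence $(\varepsilon_n)$ of positive reals $\mathcal I$-convergent to $0$ with $\{n:|f_n(x)|\ge\varepsilon_n\}\in\mathcal I$ for each $x$.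 $\mathcal C(X)$ = continuous real functions on $X$. A normal space is a Hausdorff space in which disjoint closed sets have disjoint open neighbourhoods. *)

theory Defs
  imports "HOL-Analysis.Analysis"
begin

definition ideal_on_nat :: "nat set set \<Rightarrow> bool" where
  "ideal_on_nat I \<longleftrightarrow>
     (\<forall>A\<in>I. \<forall>B\<in>I. A \<union> B \<in> I) \<and>
     (\<forall>A\<in>I. \<forall>B. B \<subseteq> A \<longrightarrow> B \<in> I) \<and>
     (\<forall>A. finite A \<longrightarrow> A \<in> I) \<and>
     UNIV \<notin> I"

definition I_conv0 :: "nat set set \<Rightarrow> (nat \<Rightarrow> real) \<Rightarrow> bool" where
  "I_conv0 I a \<longleftrightarrow> (\<forall>\<epsilon>>0. {n. \<bar>a n\<bar> \<ge> \<epsilon>} \<in> I)"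

definition I_pointwise0 :: "nat set set \<Rightarrow> 'a set \<Rightarrow> (nat \<Rightarrow> 'a \<Rightarrow> real) \<Rightarrow> bool" where
  "I_pointwise0 I S f \<longleftrightarrow> (\<forall>x\<in>S. I_conv0 I (\<lambda>n. f n x))"

definition I_uniform0 :: "nat set set \<Rightarrow> 'a set \<Rightarrow> (nat \<Rightarrow> 'a \<Rightarrow> real) \<Rightarrow> bool" where
  "I_uniform0 I S f \<longleftrightarrow> (\<forall>\<epsilon>>0. {n. \<exists>x\<in>S. \<bar>f n x\<bar> \<ge> \<epsilon>} \<in> I)"

definition I_sigma_uniform0 :: "nat set set \<Rightarrow> 'a set \<Rightarrow> (nat \<Rightarrow> 'a \<Rightarrow> real) \<Rightarrow> bool" where
  "I_sigma_uniform0 I S f \<longleftrightarrow>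
     (\<exists>Xk :: nat \<Rightarrow> 'a set. S = (\<Union>k. Xk k) \<and> (\<forall>k. I_uniform0 I (Xk k) f))"

definition I_quasi_normal0 :: "nat set set \<Rightarrow> 'a set \<Rightarrow> (nat \<Rightarrow> 'a \<Rightarrow> real) \<Rightarrow> bool" where
  "I_quasi_normal0 I S f \<longleftrightarrow>
     (\<exists>e :: nat \<Rightarrow> real. (\<forall>n. e n > 0) \<and> I_conv0 I e \<and>
        (\<forall>x\<in>S. {n. \<bar>f n x\<bar> \<ge> e n} \<in> I))"

definition normal_T2_space :: "'a topology \<Rightarrow> bool" where
  "normal_T2_space X \<longleftrightarrow> Hausdorff_space X \<and> normal_space X"

end

theory Submission
  imports Defs
begin

text \<open>If \<open>X\<close> is finite and \<open>I \<subseteq> J\<close>, the finitely many sets witnessing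
  \<open>I\<close>-pointwise convergence combine to one set in \<open>I \<subseteq> J\<close>; quasi-normal and
  \<open>\<sigma>\<close>-uniform convergence both imply pointwise convergence.
  Conversely, a set \<open>A \<in> I - J\<close> turns into the sequence of constant functions
  \<open>indicator A n\<close>, which converges \<open>I\<close>-uniformly but not \<open>J\<close>-uniformly.
  If \<open>X\<close> is infinite, the Hausdorff property gives pairwise disjoint nonempty open sets
  \<open>U\<^sub>n\<close>, and Urysohn's lemma continuous \<open>f\<^sub>n\<close> attaining \<open>1\<close> and vanishing
  off \<open>U\<^sub>n\<close>. At each point at most one \<open>f\<^sub>n\<close> is nonzero, so \<open>(f\<^sub>n)\<close> is
  \<open>I\<close>-quasi-normally convergent (with \<open>\<epsilon>\<^sub>n = 1 / (n + 1)\<close>) and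
  \<open>I\<close>-\<open>\<sigma>\<close>-uniformly convergent (on the pieces where only \<open>f\<^sub>k\<close> may be
  nonzero), while \<open>sup \<bar>f\<^sub>n\<bar> = 1\<close> for every \<open>n\<close> rules out
  \<open>J\<close>-uniform convergence.\<close>

lemma ideal_on_nat_Un: "ideal_on_nat I \<Longrightarrow> A \<in> I \<Longrightarrow> B \<in> I \<Longrightarrow> A \<union> B \<in> I"
  unfolding ideal_on_nat_def by blast

lemma ideal_on_nat_subset: "ideal_on_nat I \<Longrightarrow> A \<in> I \<Longrightarrow> B \<subseteq> A \<Longrightarrow> B \<in> I"
  unfolding ideal_on_nat_def by blast

lemma ideal_on_nat_finite: "ideal_on_nat I \<Longrightarrow> finite A \<Longrightarrow> A \<in> I"
  unfolding ideal_on_nat_def by blast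

lemma ideal_on_nat_UNIV: "ideal_on_nat I \<Longrightarrow> UNIV \<notin> I"
  unfolding ideal_on_nat_def by blast

lemma ideal_on_nat_finite_UN:
  assumes "ideal_on_nat I" "finite S" "\<And>x. x \<in> S \<Longrightarrow> A x \<in> I"
  shows "(\<Union>x\<in>S. A x) \<in> I"
  using assms(2,3)
  by (induction S rule: finite_induct) (auto intro: ideal_on_nat_Un ideal_on_nat_finite assms(1))

lemma LIMSEQ_imp_I_conv0:
  assumes "ideal_on_nat I" "a \<longlonglongrightarrow> 0"
  shows "I_conv0 I a"
  unfolding I_conv0_def
proof (intro allI impI)
  fix \<epsilon> :: real
  assume "\<epsilon> > 0"
  then have "\<forall>\<^sub>F n in sequentially. \<bar>a n\<bar> < \<epsilon>"
    using assms(2) by (auto simp: tendsto_iff)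
  then have "finite {n. \<not> \<bar>a n\<bar> < \<epsilon>}"
    by (simp add: eventually_cofinite[symmetric] cofinite_eq_sequentially)
  then show "{n. \<bar>a n\<bar> \<ge> \<epsilon>} \<in> I"
    by (simp add: not_less ideal_on_nat_finite[OF assms(1)])
qed

lemma I_conv0_add:
  assumes "ideal_on_nat I" "I_conv0 I a" "I_conv0 I b"
  shows "I_conv0 I (\<lambda>n. a n + b n)"
  unfolding I_conv0_def
proof (intro allI impI)
  fix \<epsilon> :: real
  assume "\<epsilon> > 0"
  then have "\<epsilon> / 2 > 0"
    by simp
  then have "{n. \<bar>a n\<bar> \<ge> \<epsilon> / 2} \<in> I" "{n. \<bar>b n\<bar> \<ge> \<epsilon> / 2} \<in> I"
    using assms(2,3) unfolding I_conv0_def by blast+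
  then have "{n. \<bar>a n\<bar> \<ge> \<epsilon> / 2} \<union> {n. \<bar>b n\<bar> \<ge> \<epsilon> / 2} \<in> I"
    by (rule ideal_on_nat_Un[OF assms(1)])
  moreover have "{n. \<bar>a n + b n\<bar> \<ge> \<epsilon>} \<subseteq> {n. \<bar>a n\<bar> \<ge> \<epsilon> / 2} \<union> {n. \<bar>b n\<bar> \<ge> \<epsilon> / 2}"
    by auto
  ultimately show "{n. \<bar>a n + b n\<bar> \<ge> \<epsilon>} \<in> I"
    by (rule ideal_on_nat_subset[OF assms(1)])
qed

lemma I_conv0_indicator_iff:
  assumes "ideal_on_nat I"
  shows "I_conv0 I (indicator A) \<longleftrightarrow> A \<in> I"
proof
  assume "I_conv0 I (indicator A)"
  then have "{n. \<bar>indicator A n :: real\<bar> \<ge> 1} \<in> I"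
    unfolding I_conv0_def by simp
  moreover have "{n. \<bar>indicator A n :: real\<bar> \<ge> 1} = A"
    by (auto simp: indicator_def)
  ultimately show "A \<in> I" by simp
next
  assume "A \<in> I"
  moreover have "{n. \<bar>indicator A n :: real\<bar> \<ge> \<epsilon>} \<subseteq> A" if "\<epsilon> > 0" for \<epsilon>
    using that by (auto simp: indicator_def)
  ultimately show "I_conv0 I (indicator A)"
    unfolding I_conv0_def using ideal_on_nat_subset[OF assms] by blast
qed

lemma I_uniform0_const_iff:
  assumes "S \<noteq> {}"
  shows "I_uniform0 I S (\<lambda>n x. a n) \<longleftrightarrow> I_conv0 I a"
  using assms by (simp add: I_uniform0_def I_conv0_def ex_in_conv)

lemma I_uniform0_imp_I_sigma_uniform0: "I_uniform0 I S f \<Longrightarrow> I_sigma_uniform0 I S f"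
  unfolding I_sigma_uniform0_def by (intro exI[of _ "\<lambda>k. S"]) simp

lemma I_conv0_imp_I_quasi_normal0_const:
  assumes "ideal_on_nat I" "I_conv0 I a"
  shows "I_quasi_normal0 I S (\<lambda>n x. a n)"
  unfolding I_quasi_normal0_def
proof (intro exI[of _ "\<lambda>n. \<bar>a n\<bar> + inverse (real (Suc n))"] conjI ballI allI)
  have "I_conv0 I (\<lambda>n. \<bar>a n\<bar>)"
    using assms(2) by (simp add: I_conv0_def)
  then show "I_conv0 I (\<lambda>n. \<bar>a n\<bar> + inverse (real (Suc n)))"
    using LIMSEQ_imp_I_conv0[OF assms(1) LIMSEQ_inverse_real_of_nat] by (rule I_conv0_add[OF assms(1)])
qed (auto simp: add_nonneg_pos ideal_on_nat_finite[OF assms(1)])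

lemma I_quasi_normal0_imp_I_pointwise0:
  assumes "ideal_on_nat I" "I_quasi_normal0 I S f"
  shows "I_pointwise0 I S f"
  unfolding I_pointwise0_def I_conv0_def
proof (intro ballI allI impI)
  fix x and \<epsilon> :: real
  assume "x \<in> S" "\<epsilon> > 0"
  obtain e where "I_conv0 I e" "\<And>x. x \<in> S \<Longrightarrow> {n. \<bar>f n x\<bar> \<ge> e n} \<in> I"
    using assms(2) unfolding I_quasi_normal0_def by blast
  with \<open>x \<in> S\<close> \<open>\<epsilon> > 0\<close> have "{n. \<bar>f n x\<bar> \<ge> e n} \<union> {n. \<bar>e n\<bar> \<ge> \<epsilon>} \<in> I"
    by (simp add: I_conv0_def ideal_on_nat_Un[OF assms(1)])
  moreover have "{n. \<bar>f n x\<bar> \<ge> \<epsilon>} \<subseteq> {n. \<bar>f n x\<bar> \<ge> e n} \<union> {n. \<bar>e n\<bar> \<ge> \<epsilon>}"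
    by auto
  ultimately show "{n. \<bar>f n x\<bar> \<ge> \<epsilon>} \<in> I"
    by (rule ideal_on_nat_subset[OF assms(1)])
qed

lemma I_sigma_uniform0_imp_I_pointwise0:
  assumes "ideal_on_nat I" "I_sigma_uniform0 I S f"
  shows "I_pointwise0 I S f"
  unfolding I_pointwise0_def I_conv0_def
proof (intro ballI allI impI)
  fix x and \<epsilon> :: real
  assume "x \<in> S" "\<epsilon> > 0"
  obtain Xk where cover: "S = (\<Union>k::nat. Xk k)" and uniform: "\<And>k. I_uniform0 I (Xk k) f"
    using assms(2) unfolding I_sigma_uniform0_def by blast
  from \<open>x \<in> S\<close> obtain k where "x \<in> Xk k"
    unfolding cover by blast
  moreover have "{n. \<exists>y\<in>Xk k. \<bar>f n y\<bar> \<ge> \<epsilon>} \<in> I"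
    using \<open>\<epsilon> > 0\<close> uniform unfolding I_uniform0_def by blast
  ultimately show "{n. \<bar>f n x\<bar> \<ge> \<epsilon>} \<in> I"
    by (auto intro: ideal_on_nat_subset[OF assms(1)])
qed

lemma I_pointwise0_imp_I_uniform0_finite:
  assumes "ideal_on_nat I" "I \<subseteq> J" "finite S" "I_pointwise0 I S f"
  shows "I_uniform0 J S f"
  unfolding I_uniform0_def
proof (intro allI impI)
  fix \<epsilon> :: real
  assume "\<epsilon> > 0"
  have "{n. \<exists>x\<in>S. \<bar>f n x\<bar> \<ge> \<epsilon>} = (\<Union>x\<in>S. {n. \<bar>f n x\<bar> \<ge> \<epsilon>})"
    by auto
  also have "\<dots> \<in> I"
    using assms(1,3,4) \<open>\<epsilon> > 0\<close> unfolding I_pointwise0_def I_conv0_def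
    by (intro ideal_on_nat_finite_UN) blast+
  finally show "{n. \<exists>x\<in>S. \<bar>f n x\<bar> \<ge> \<epsilon>} \<in> J"
    using assms(2) by blast
qed

lemma not_I_uniform0_if_bounded_below:
  assumes "ideal_on_nat I" "\<epsilon> > 0" "\<And>n. \<exists>x\<in>S. \<bar>f n x\<bar> \<ge> \<epsilon>"
  shows "\<not> I_uniform0 I S f"
proof
  assume "I_uniform0 I S f"
  then have "{n. \<exists>x\<in>S. \<bar>f n x\<bar> \<ge> \<epsilon>} \<in> I"
    using assms(2) unfolding I_uniform0_def by blast
  moreover have "{n. \<exists>x\<in>S. \<bar>f n x\<bar> \<ge> \<epsilon>} = UNIV"
    using assms(3) by blast
  ultimately show False
    using ideal_on_nat_UNIV[OF assms(1)] by simp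
qed

lemma I_quasi_normal0_if_finite_support:
  assumes "ideal_on_nat I" "\<And>x. x \<in> S \<Longrightarrow> finite {n. f n x \<noteq> 0}"
  shows "I_quasi_normal0 I S f"
  unfolding I_quasi_normal0_def
proof (intro exI[of _ "\<lambda>n. inverse (real (Suc n))"] conjI ballI allI)
  show "I_conv0 I (\<lambda>n. inverse (real (Suc n)))"
    using assms(1) LIMSEQ_inverse_real_of_nat by (rule LIMSEQ_imp_I_conv0)
  fix x
  assume "x \<in> S"
  have "{n. \<bar>f n x\<bar> \<ge> inverse (real (Suc n))} \<subseteq> {n. f n x \<noteq> 0}"
    by (auto simp: not_le)
  then show "{n. \<bar>f n x\<bar> \<ge> inverse (real (Suc n))} \<in> I"
    using assms \<open>x \<in> S\<close> by (meson finite_subset ideal_on_nat_finite)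
qed simp

lemma I_sigma_uniform0_if_disjoint_support:
  assumes "ideal_on_nat I" "disjoint_family (\<lambda>n. {x \<in> S. f n x \<noteq> 0})"
  shows "I_sigma_uniform0 I S f"
  unfolding I_sigma_uniform0_def
proof (intro exI[of _ "\<lambda>k. {x \<in> S. \<forall>n. n \<noteq> k \<longrightarrow> f n x = 0}"] conjI allI)
  have "x \<in> (\<Union>k. {x \<in> S. \<forall>n. n \<noteq> k \<longrightarrow> f n x = 0})" if "x \<in> S" for x
  proof (cases "\<exists>k. f k x \<noteq> 0")
    case True
    then obtain k where "f k x \<noteq> 0" ..
    with assms(2) \<open>x \<in> S\<close> have "\<forall>n. n \<noteq> k \<longrightarrow> f n x = 0"
      unfolding disjoint_family_on_def by blast
    with \<open>x \<in> S\<close> show ?thesis by blast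
  qed (use \<open>x \<in> S\<close> in blast)
  then show "S = (\<Union>k. {x \<in> S. \<forall>n. n \<noteq> k \<longrightarrow> f n x = 0})"
    by blast
  fix k
  have "{n. \<exists>x \<in> {x \<in> S. \<forall>n. n \<noteq> k \<longrightarrow> f n x = 0}. \<bar>f n x\<bar> \<ge> \<epsilon>} \<subseteq> {k}"
    if "\<epsilon> > 0" for \<epsilon>
    using that by auto
  then show "I_uniform0 I {x \<in> S. \<forall>n. n \<noteq> k \<longrightarrow> f n x = 0} f"
    unfolding I_uniform0_def
    by (meson finite.emptyI finite_insert finite_subset ideal_on_nat_finite[OF assms(1)])
qed

lemma Hausdorff_space_split_infinite_openin:
  assumes "Hausdorff_space X" "openin X W" "infinite W"
  obtains U V where "openin X U" "U \<noteq> {}" "openin X V" "infinite V" "U \<subseteq> W" "V \<subseteq> W"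
    "disjnt U V"
proof -
  have W: "W \<subseteq> topspace X"
    using assms(2) by (rule openin_subset)
  obtain a where "a \<in> W"
    using assms(3) by fastforce
  moreover obtain b where "b \<in> W - {a}"
    using assms(3) by (metis ex_in_conv finite.emptyI infinite_remove)
  ultimately obtain A B where A: "openin X A" "a \<in> A" and B: "openin X B" "b \<in> B"
    and "disjnt A B"
    using assms(1) W unfolding Hausdorff_space_def by (metis DiffE insertI1 subsetD)
  show thesis
  proof (cases "finite (A \<inter> W)")
    case True
    then have "closedin X (A \<inter> W)"
      using Hausdorff_imp_t1_space[OF assms(1)] W by (auto simp: t1_space_closedin_finite)
    then have "openin X (W - A \<inter> W)"
      by (rule openin_diff[OF assms(2)])
    moreover have "infinite (W - A \<inter> W)"
      using assms(3) True by (metis finite_Diff2)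
    ultimately show thesis
      using A assms(2) \<open>a \<in> W\<close> by (intro that[of "A \<inter> W" "W - A \<inter> W"]) (auto simp: disjnt_def)
  next
    case False
    then show thesis
      using A B assms(2) \<open>b \<in> W - {a}\<close> \<open>disjnt A B\<close>
      by (intro that[of "B \<inter> W" "A \<inter> W"]) (auto simp: disjnt_def)
  qed
qed

text \<open>Split off a nonempty open cell from an infinite open set again and again, always
  continuing in the infinite remainder.\<close>
lemma Hausdorff_space_infinite_disjoint_openin_sequence:
  assumes "Hausdorff_space X" "infinite (topspace X)"
  obtains U :: "nat \<Rightarrow> 'a set" where "\<And>n. openin X (U n)" "\<And>n. U n \<noteq> {}" "disjoint_family U"
proof -
  have "\<forall>W. \<exists>C V. openin X W \<and> infinite W \<longrightarrow>
      openin X C \<and> C \<noteq> {} \<and> openin X V \<and> infinite V \<and> C \<subseteq> W \<and> V \<subseteq> W \<and> disjnt C V"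
    by (metis Hausdorff_space_split_infinite_openin[OF assms(1)])
  then obtain cell rest where cell_rest: "\<And>W. openin X W \<Longrightarrow> infinite W \<Longrightarrow>
      openin X (cell W) \<and> cell W \<noteq> {} \<and> openin X (rest W) \<and> infinite (rest W) \<and>
      cell W \<subseteq> W \<and> rest W \<subseteq> W \<and> disjnt (cell W) (rest W)"
    by metis
  define R where "R n = (rest ^^ n) (topspace X)" for n
  have R: "openin X (R n) \<and> infinite (R n)" for n
    by (induction n) (simp_all add: R_def cell_rest assms(2))
  have "decseq R"
    unfolding decseq_Suc_iff using cell_rest R by (simp add: R_def)
  have "cell (R m) \<inter> cell (R n) = {}" if "m < n" for m n
  proof -
    have "cell (R n) \<subseteq> R n"
      using cell_rest R by blast
    also have "\<dots> \<subseteq> R (Suc m)"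
      using decseqD[OF \<open>decseq R\<close> Suc_leI[OF that]] .
    finally have "cell (R n) \<subseteq> R (Suc m)" .
    then show ?thesis
      using cell_rest[OF conjunct1[OF R] conjunct2[OF R], of m] by (auto simp: R_def disjnt_def)
  qed
  then have "disjoint_family (\<lambda>n. cell (R n))"
    unfolding disjoint_family_on_def by (metis inf_commute linorder_neqE_nat)
  then show thesis
    using cell_rest R by (intro that) auto
qed

lemma normal_space_bump_in_openin:
  assumes "t1_space X" "normal_space X" "openin X U" "U \<noteq> {}"
  shows "\<exists>g. continuous_map X euclideanreal g \<and> 1 \<in> g ` topspace X \<and>
    (\<forall>x \<in> topspace X - U. g x = 0)"
proof -
  obtain a where "a \<in> U"
    using assms(4) by blast
  then have "a \<in> topspace X"
    using assms(3) openin_subset by blast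
  then have "closedin X {a}"
    using assms(1) by (rule closedin_t1_singleton[rotated])
  moreover have "closedin X (topspace X - U)"
    using assms(3) by blast
  moreover have "disjnt {a} (topspace X - U)"
    using \<open>a \<in> U\<close> by simp
  ultimately obtain g where "continuous_map X euclideanreal g" "g ` {a} \<subseteq> {1}"
    "g ` (topspace X - U) \<subseteq> {0}"
    using Urysohn_lemma_alt[OF assms(2)] by metis
  moreover have "1 \<in> g ` topspace X"
    using \<open>a \<in> topspace X\<close> \<open>g ` {a} \<subseteq> {1}\<close> by (metis image_eqI insertI1 singletonD subsetD)
  ultimately show ?thesis
    by blast
qed

lemma exists_I_convergent_not_J_uniform_if_infinite:
  assumes "ideal_on_nat I" "ideal_on_nat J" "Hausdorff_space X" "normal_space X"
    "infinite (topspace X)"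
  obtains f :: "nat \<Rightarrow> 'a \<Rightarrow> real" where "\<And>n. continuous_map X euclideanreal (f n)"
    "I_quasi_normal0 I (topspace X) f" "I_sigma_uniform0 I (topspace X) f"
    "\<not> I_uniform0 J (topspace X) f"
proof -
  obtain U :: "nat \<Rightarrow> 'a set" where U: "\<And>n. openin X (U n)" "\<And>n. U n \<noteq> {}" "disjoint_family U"
    using Hausdorff_space_infinite_disjoint_openin_sequence[OF assms(3,5)] by blast
  have "\<exists>g. continuous_map X euclideanreal g \<and> 1 \<in> g ` topspace X \<and>
      (\<forall>x \<in> topspace X - U n. g x = 0)" for n
    using Hausdorff_imp_t1_space[OF assms(3)] assms(4) U(1,2) by (rule normal_space_bump_in_openin)
  then obtain f where f: "\<And>n. continuous_map X euclideanreal (f n)" "\<And>n. 1 \<in> f n ` topspace X"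
    "\<And>n x. x \<in> topspace X - U n \<Longrightarrow> f n x = 0"
    by metis
  have support: "{x \<in> topspace X. f n x \<noteq> 0} \<subseteq> U n" for n
    using f(3) by blast
  have disjoint: "disjoint_family (\<lambda>n. {x \<in> topspace X. f n x \<noteq> 0})"
    unfolding disjoint_family_on_def
  proof (intro ballI impI)
    fix m n :: nat
    assume "m \<noteq> n"
    then have "U m \<inter> U n = {}"
      using U(3) unfolding disjoint_family_on_def by blast
    then show "{x \<in> topspace X. f m x \<noteq> 0} \<inter> {x \<in> topspace X. f n x \<noteq> 0} = {}"
      using support[of m] support[of n] by blast
  qed
  have "finite {n. f n x \<noteq> 0}" if "x \<in> topspace X" for x
  proof (cases "\<exists>k. f k x \<noteq> 0")
    case True
    then obtain k where "f k x \<noteq> 0" ..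
    have "n = k" if "f n x \<noteq> 0" for n
      using disjoint \<open>x \<in> topspace X\<close> \<open>f k x \<noteq> 0\<close> that
      unfolding disjoint_family_on_def by blast
    then have "{n. f n x \<noteq> 0} \<subseteq> {k}"
      by blast
    then show ?thesis
      by (rule finite_subset) simp
  qed simp
  then have "I_quasi_normal0 I (topspace X) f"
    by (rule I_quasi_normal0_if_finite_support[OF assms(1)])
  moreover have "I_sigma_uniform0 I (topspace X) f"
    using assms(1) disjoint by (rule I_sigma_uniform0_if_disjoint_support)
  moreover have "\<not> I_uniform0 J (topspace X) f"
  proof (rule not_I_uniform0_if_bounded_below[OF assms(2), of 1])
    show "\<exists>x\<in>topspace X. \<bar>f n x\<bar> \<ge> 1" for n
      using f(2)[of n] by force
  qed simp
  ultimately show thesis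
    using f(1) that by blast
qed

lemma exists_I_convergent_not_J_uniform:
  assumes "ideal_on_nat I" "ideal_on_nat J" "normal_T2_space X" "topspace X \<noteq> {}"
    "\<not> (finite (topspace X) \<and> I \<subseteq> J)"
  obtains f :: "nat \<Rightarrow> 'a \<Rightarrow> real" where "\<And>n. continuous_map X euclideanreal (f n)"
    "I_quasi_normal0 I (topspace X) f" "I_sigma_uniform0 I (topspace X) f"
    "\<not> I_uniform0 J (topspace X) f"
proof (cases "finite (topspace X)")
  case False
  then show thesis
    using assms(1-3) that unfolding normal_T2_space_def by (metis exists_I_convergent_not_J_uniform_if_infinite)
next
  case True
  then obtain A where "A \<in> I" "A \<notin> J"
    using assms(5) by blast
  then have "I_conv0 I (indicator A)" "\<not> I_conv0 J (indicator A)"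
    using assms(1,2) by (simp_all add: I_conv0_indicator_iff)
  then show thesis
    using assms(1) I_uniform0_const_iff[OF assms(4)]
    by (intro that[of "\<lambda>n x. indicator A n"] I_conv0_imp_I_quasi_normal0_const
        I_uniform0_imp_I_sigma_uniform0) simp_all
qed

theorem proposition3p3:
  fixes I J :: "nat set set" and X :: "'a topology"
  assumes "ideal_on_nat I" and "ideal_on_nat J"
    and "normal_T2_space X" and "topspace X \<noteq> {}"
  shows "((finite (topspace X) \<and> I \<subseteq> J) \<longleftrightarrow>
           (\<forall>f :: nat \<Rightarrow> 'a \<Rightarrow> real. (\<forall>n. continuous_map X euclideanreal (f n)) \<longrightarrow>
              I_pointwise0 I (topspace X) f \<longrightarrow> I_uniform0 J (topspace X) f))
       \<and> ((finite (topspace X) \<and> I \<subseteq> J) \<longleftrightarrow>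
           (\<forall>f :: nat \<Rightarrow> 'a \<Rightarrow> real. (\<forall>n. continuous_map X euclideanreal (f n)) \<longrightarrow>
              I_quasi_normal0 I (topspace X) f \<longrightarrow> I_uniform0 J (topspace X) f))
       \<and> ((finite (topspace X) \<and> I \<subseteq> J) \<longleftrightarrow>
           (\<forall>f :: nat \<Rightarrow> 'a \<Rightarrow> real. (\<forall>n. continuous_map X euclideanreal (f n)) \<longrightarrow>
              I_sigma_uniform0 I (topspace X) f \<longrightarrow> I_uniform0 J (topspace X) f))"
proof -
  have sufficient: "I_uniform0 J (topspace X) f"
    if "finite (topspace X) \<and> I \<subseteq> J" "I_pointwise0 I (topspace X) f" for f :: "nat \<Rightarrow> 'a \<Rightarrow> real"
    using assms(1) that by (metis I_pointwise0_imp_I_uniform0_finite)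
  have necessary: "\<exists>f :: nat \<Rightarrow> 'a \<Rightarrow> real. (\<forall>n. continuous_map X euclideanreal (f n)) \<and>
      I_quasi_normal0 I (topspace X) f \<and> I_sigma_uniform0 I (topspace X) f \<and>
      \<not> I_uniform0 J (topspace X) f"
    if "\<not> (finite (topspace X) \<and> I \<subseteq> J)"
    using exists_I_convergent_not_J_uniform[OF assms that] by metis
  show ?thesis
    using sufficient necessary I_quasi_normal0_imp_I_pointwise0[OF assms(1)]
      I_sigma_uniform0_imp_I_pointwise0[OF assms(1)]
    by blast
qed

end
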